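(* Consider $\mathbb{Z}^2$ with standard generating set $\{a,b\}$, $a=(1,0)$, $b=(0,1)$. Let $D\subseteq\{a,b,a^{-1},b^{-1}\}$ with $|D|\in\{2,3\}$. Then the infinite snake problem for $(\mathbb{Z}^2,\{a,b\})$ restricted to directions in $D$ is decidable.
   Context: A tileset graph for $(\mathbb{Z}^2,\{a,b\})$ is a finite multigraph $\Gamma=(A,B)$ whose edges are triples $(t,t',s)$ with $t,t'\in A$, $s\in\{a,b,a^{-1},b^{-1}\}$, such that $(t,t',s)\in B$ implies $(t',t,s^{-1})\in B$. A bi-infinite $\Gamma$-snake is a pair $(\omega,\zeta)$, $\omega:\mathbb{Z}\to\mathbb{Z}^2$ injective, $\zeta:\mathbb{Z}\to A$, with $d\omega_i:=\omega(i+1)-\omega(i)\in\{a,b,a^{-1},b^{-1}\}$ and $(\zeta(i),\zeta(i+1),d\omega_i)\in B$ for all $i$. The problem restricted to directions in $D$: given $\Gamma$, decide whether there is a bi-infinite $\Gamma$-snake with $d\omega_i\in D$ for all $i\in\mathbb{Z}$. *)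

theory Defs
  imports Main "HOL-Library.Nat_Bijection" "HOL-Library.Product_Plus"
begin

type_synonym z2 = "int \<times> int"

definition gen_a :: z2 where "gen_a = (1, 0)"
definition gen_b :: z2 where "gen_b = (0, 1)"

definition gens :: "z2 set" where
  "gens = {gen_a, gen_b, - gen_a, - gen_b}"

text \<open>Tiles are natural numbers; an edge is a triple (t, t', s).
  Multiplicities of edges are irrelevant for the existence of snakes,
  so the edge multiset is represented by its set.\<close>
type_synonym tile = nat
type_synonym edge = "tile \<times> tile \<times> z2"

definition tileset_graph :: "tile set \<Rightarrow> edge set \<Rightarrow> bool" where
  "tileset_graph A B \<longleftrightarrow> finite A \<and> finite B \<and>
     (\<forall>(t, t', s) \<in> B. t \<in> A \<and> t' \<in> A \<and> s \<in> gens) \<and>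
     (\<forall>t t' s. (t, t', s) \<in> B \<longrightarrow> (t', t, - s) \<in> B)"

definition has_snake_in :: "z2 set \<Rightarrow> tile set \<Rightarrow> edge set \<Rightarrow> bool" where
  "has_snake_in D A B \<longleftrightarrow>
     (\<exists>(\<omega> :: int \<Rightarrow> z2) (\<zeta> :: int \<Rightarrow> tile).
        inj \<omega> \<and> (\<forall>i. \<zeta> i \<in> A) \<and>
        (\<forall>i. \<omega> (i + 1) - \<omega> i \<in> gens \<and> \<omega> (i + 1) - \<omega> i \<in> D) \<and>
        (\<forall>i. (\<zeta> i, \<zeta> (i + 1), \<omega> (i + 1) - \<omega> i) \<in> B))"

datatype recf =
    Zero
  | Succ
  | Proj nat
  | Comp recf "recf list"
  | PrimRec recf recf
  | Minim recf

inductive rec_eval :: "recf \<Rightarrow> nat list \<Rightarrow> nat \<Rightarrow> bool" where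
  zero: "rec_eval Zero xs 0"
| succ: "rec_eval Succ [x] (Suc x)"
| proj: "i < length xs \<Longrightarrow> rec_eval (Proj i) xs (xs ! i)"
| comp: "list_all2 (\<lambda>g y. rec_eval g xs y) gs ys \<Longrightarrow> rec_eval f ys z
           \<Longrightarrow> rec_eval (Comp f gs) xs z"
| pr0: "rec_eval f xs y \<Longrightarrow> rec_eval (PrimRec f g) (0 # xs) y"
| prS: "rec_eval (PrimRec f g) (x # xs) y \<Longrightarrow> rec_eval g (x # y # xs) z
           \<Longrightarrow> rec_eval (PrimRec f g) (Suc x # xs) z"
| mn: "rec_eval f (y # xs) 0 \<Longrightarrow> (\<forall>k<y. \<exists>v. rec_eval f (k # xs) v \<and> 0 < v)
           \<Longrightarrow> rec_eval (Minim f) xs y"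

definition dir_of :: "nat \<Rightarrow> z2" where
  "dir_of d = (if d = 0 then gen_a else if d = 1 then gen_b
               else if d = 2 then - gen_a else - gen_b)"

definition edges_of :: "(nat \<times> nat \<times> nat) list \<Rightarrow> edge set" where
  "edges_of es = (\<lambda>(t, t', d). (t, t', dir_of d)) ` set es"

definition encode_instance :: "nat list \<Rightarrow> (nat \<times> nat \<times> nat) list \<Rightarrow> nat" where
  "encode_instance ts es =
     prod_encode (list_encode ts,
                  list_encode (map (\<lambda>(t, t', d). prod_encode (t, prod_encode (t', d))) es))"

definition snake_problem_decidable :: "z2 set \<Rightarrow> bool" where
  "snake_problem_decidable D \<longleftrightarrow>
     (\<exists>p. \<forall>ts es. (\<forall>(t, t', d) \<in> set es. d < 4) \<longrightarrow>
                  tileset_graph (set ts) (edges_of es) \<longrightarrow>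
                  rec_eval p [encode_instance ts es]
                    (if has_snake_in D (set ts) (edges_of es) then 1 else 0))"

end

theory Submission
  imports Defs
begin

text \<open>If a generator \<open>g\<close> is missing from \<open>D\<close>, the height \<open>x \<mapsto> -\<langle>x, g\<rangle>\<close> never decreases along a
  walk with steps in \<open>D\<close>, and it stays constant only on steps orthogonal to \<open>g\<close>. A walk that
  never immediately reverses a step therefore goes straight whenever its height is constant, so
  it never returns to a point: for such \<open>D\<close> the injectivity of a snake is automatic. Snakes
  are then exactly the bi-infinite walks in the finite line graph of \<open>\<Gamma>\<close>, whose vertices are
  the edges of \<open>\<Gamma>\<close>, an edge being followed by an edge starting at its end tile in an allowed,
  non-reversing direction. A finite graph with \<open>n\<close> vertices has a bi-infinite walk iff it has a
  walk of \<open>n + 1\<close> steps. A mu-recursive program decides this by iterating \<open>n + 1\<close> times the map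
  sending a set of vertices to the set of their predecessors, sets being stored as bit masks.\<close>

section \<open>Computability by mu-recursive programs\<close>

definition computes :: "recf \<Rightarrow> nat \<Rightarrow> (nat list \<Rightarrow> nat) \<Rightarrow> bool" where
  "computes p n F \<longleftrightarrow> (\<forall>xs. length xs = n \<longrightarrow> rec_eval p xs (F xs))"

lemma computesD: "computes p n F \<Longrightarrow> length xs = n \<Longrightarrow> rec_eval p xs (F xs)"
  by (simp add: computes_def)

lemma computes_cong:
  "computes p n F \<Longrightarrow> (\<And>xs. length xs = n \<Longrightarrow> F xs = H xs) \<Longrightarrow> computes p n H"
  by (simp add: computes_def)

lemma computes_Zero: "computes Zero n (\<lambda>_. 0)"
  by (simp add: computes_def rec_eval.zero)

lemma computes_Proj: "i < n \<Longrightarrow> computes (Proj i) n (\<lambda>xs. xs ! i)"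
  by (simp add: computes_def rec_eval.proj)

lemma computes_Succ: "computes Succ 1 (\<lambda>xs. Suc (xs ! 0))"
  unfolding computes_def
proof (intro allI impI)
  fix xs :: "nat list"
  assume "length xs = 1"
  then obtain x where "xs = [x]"
    by (metis One_nat_def length_0_conv length_Suc_conv)
  then show "rec_eval Succ xs (Suc (xs ! 0))"
    by (simp add: rec_eval.succ)
qed

lemma computes_Comp:
  assumes "computes f (length gs) F" and "list_all2 (\<lambda>g G. computes g n G) gs Gs"
  shows "computes (Comp f gs) n (\<lambda>xs. F (map (\<lambda>G. G xs) Gs))"
  unfolding computes_def
proof (intro allI impI)
  fix xs :: "nat list"
  assume "length xs = n"
  with assms(2) have "list_all2 (\<lambda>g y. rec_eval g xs y) gs (map (\<lambda>G. G xs) Gs)"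
    by (induction rule: list_all2_induct) (auto simp: computes_def)
  moreover have "length (map (\<lambda>G. G xs) Gs) = length gs"
    using assms(2) by (simp add: list_all2_lengthD)
  ultimately show "rec_eval (Comp f gs) xs (F (map (\<lambda>G. G xs) Gs))"
    using assms(1) by (auto simp: computes_def intro: rec_eval.comp)
qed

lemma computes_Comp1:
  "computes f 1 F \<Longrightarrow> computes g n G \<Longrightarrow> computes (Comp f [g]) n (\<lambda>xs. F [G xs])"
  using computes_Comp[of f "[g]" F n "[G]"] by simp

lemma computes_Comp2:
  "computes f 2 F \<Longrightarrow> computes g n G \<Longrightarrow> computes h n H \<Longrightarrow>
   computes (Comp f [g, h]) n (\<lambda>xs. F [G xs, H xs])"
  using computes_Comp[of f "[g, h]" F n "[G, H]"] by (simp add: numeral_2_eq_2)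

lemma computes_Comp3:
  "computes f 3 F \<Longrightarrow> computes g n G \<Longrightarrow> computes h n H \<Longrightarrow> computes k n K \<Longrightarrow>
   computes (Comp f [g, h, k]) n (\<lambda>xs. F [G xs, H xs, K xs])"
  using computes_Comp[of f "[g, h, k]" F n "[G, H, K]"] by (simp add: numeral_3_eq_3)

lemma computes_Comp4:
  "computes f 4 F \<Longrightarrow> computes g n G \<Longrightarrow> computes h n H \<Longrightarrow> computes k n K \<Longrightarrow>
   computes l n M \<Longrightarrow> computes (Comp f [g, h, k, l]) n (\<lambda>xs. F [G xs, H xs, K xs, M xs])"
  using computes_Comp[of f "[g, h, k, l]" F n "[G, H, K, M]"] by (simp add: numeral_eq_Suc)

text \<open>The arity is written as \<open>m\<close> with \<open>0 < m\<close> rather than \<open>Suc n\<close>, so that the rule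
  also applies to arities given as numerals.\<close>
lemma computes_PrimRec:
  assumes "0 < m" "computes f (m - 1) F" "computes g (Suc m) G"
    and base: "\<And>xs. length xs = m - 1 \<Longrightarrow> H (0 # xs) = F xs"
    and step: "\<And>x xs. length xs = m - 1 \<Longrightarrow> H (Suc x # xs) = G (x # H (x # xs) # xs)"
  shows "computes (PrimRec f g) m H"
  unfolding computes_def
proof (intro allI impI)
  fix xs :: "nat list"
  assume "length xs = m"
  with \<open>0 < m\<close> obtain x ys where xs: "xs = x # ys" and ys: "length ys = m - 1"
    by (cases xs) auto
  have "rec_eval (PrimRec f g) (x # ys) (H (x # ys))"
  proof (induction x)
    case 0
    show ?case
      using computesD[OF assms(2) ys] base[OF ys] by (simp add: rec_eval.pr0)
  next
    case (Suc x)
    have "rec_eval g (x # H (x # ys) # ys) (G (x # H (x # ys) # ys))"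
      using computesD[OF assms(3)] ys \<open>0 < m\<close> by simp
    then show ?case
      using rec_eval.prS[OF Suc.IH] step[OF ys] by simp
  qed
  then show "rec_eval (PrimRec f g) xs (H xs)"
    using xs by simp
qed

lemma computes_Minim:
  assumes "computes f (Suc n) F" and "\<And>xs. length xs = n \<Longrightarrow> \<exists>y. F (y # xs) = 0"
  shows "computes (Minim f) n (\<lambda>xs. LEAST y. F (y # xs) = 0)"
  unfolding computes_def
proof (intro allI impI)
  fix xs :: "nat list"
  assume "length xs = n"
  define y where "y = (LEAST y. F (y # xs) = 0)"
  have F_y: "F (y # xs) = 0"
    unfolding y_def using assms(2)[OF \<open>length xs = n\<close>] by (rule LeastI_ex)
  have F_below: "0 < F (k # xs)" if "k < y" for k
    using not_less_Least[OF that[unfolded y_def]] by simp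
  have eval: "rec_eval f (k # xs) (F (k # xs))" for k
    using computesD[OF assms(1)] \<open>length xs = n\<close> by simp
  show "rec_eval (Minim f) xs y"
  proof (rule rec_eval.mn)
    show "rec_eval f (y # xs) 0"
      using eval[of y] F_y by simp
    show "\<forall>k<y. \<exists>v. rec_eval f (k # xs) v \<and> 0 < v"
      using eval F_below by blast
  qed
qed

primrec p_const :: "nat \<Rightarrow> recf" where
  "p_const 0 = Zero"
| "p_const (Suc k) = Comp Succ [p_const k]"

lemma computes_const: "computes (p_const k) n (\<lambda>_. k)"
proof (induction k)
  case (Suc k)
  show ?case
    using computes_Comp1[OF computes_Succ Suc.IH] by simp
qed (simp add: computes_Zero)

declare p_const.simps [simp del]

named_theorems computes_intros
declare computes_Zero [computes_intros] computes_Succ [computes_intros]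
  computes_Proj [computes_intros] computes_const [computes_intros]
  computes_Comp1 [computes_intros] computes_Comp2 [computes_intros]
  computes_Comp3 [computes_intros] computes_Comp4 [computes_intros]

section \<open>A library of computable functions\<close>

definition p_add :: recf where "p_add = PrimRec (Proj 0) (Comp Succ [Proj 1])"

lemma computes_add [computes_intros]: "computes p_add 2 (\<lambda>xs. xs ! 0 + xs ! 1)"
  unfolding p_add_def by (rule computes_PrimRec) (rule computes_intros | simp)+

definition p_pred :: recf where "p_pred = PrimRec Zero (Proj 0)"

lemma computes_pred [computes_intros]: "computes p_pred 1 (\<lambda>xs. xs ! 0 - 1)"
  unfolding p_pred_def by (rule computes_PrimRec) (rule computes_intros | simp)+

definition p_sub_rev :: recf where "p_sub_rev = PrimRec (Proj 0) (Comp p_pred [Proj 1])"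

lemma computes_sub_rev [computes_intros]: "computes p_sub_rev 2 (\<lambda>xs. xs ! 1 - xs ! 0)"
  unfolding p_sub_rev_def by (rule computes_PrimRec) (rule computes_intros | simp)+

definition p_sub :: recf where "p_sub = Comp p_sub_rev [Proj 1, Proj 0]"

lemma computes_sub [computes_intros]: "computes p_sub 2 (\<lambda>xs. xs ! 0 - xs ! 1)"
  unfolding p_sub_def by (rule computes_cong) (rule computes_intros | simp)+

definition p_mul :: recf where "p_mul = PrimRec Zero (Comp p_add [Proj 1, Proj 2])"

lemma computes_mul [computes_intros]: "computes p_mul 2 (\<lambda>xs. xs ! 0 * xs ! 1)"
  unfolding p_mul_def by (rule computes_PrimRec) (rule computes_intros | simp)+

definition p_is_zero :: recf where "p_is_zero = Comp p_sub [p_const 1, Proj 0]"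

lemma computes_is_zero [computes_intros]: "computes p_is_zero 1 (\<lambda>xs. of_bool (xs ! 0 = 0))"
  unfolding p_is_zero_def by (rule computes_cong) (rule computes_intros | simp)+

definition p_nonzero :: recf where "p_nonzero = Comp p_is_zero [p_is_zero]"

lemma computes_nonzero [computes_intros]: "computes p_nonzero 1 (\<lambda>xs. of_bool (xs ! 0 \<noteq> 0))"
  unfolding p_nonzero_def by (rule computes_cong) (rule computes_intros | simp)+

definition p_eq :: recf where "p_eq = Comp p_is_zero [Comp p_add [p_sub, p_sub_rev]]"

lemma computes_eq [computes_intros]: "computes p_eq 2 (\<lambda>xs. of_bool (xs ! 0 = xs ! 1))"
  unfolding p_eq_def by (rule computes_cong) (rule computes_intros | simp)+

definition p_pow2 :: recf where "p_pow2 = PrimRec (p_const 1) (Comp p_add [Proj 1, Proj 1])"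

lemma computes_pow2 [computes_intros]: "computes p_pow2 1 (\<lambda>xs. 2 ^ xs ! 0)"
  unfolding p_pow2_def by (rule computes_PrimRec) (rule computes_intros | simp)+

definition p_mod2 :: recf where "p_mod2 = PrimRec Zero (Comp p_is_zero [Proj 1])"

lemma computes_mod2 [computes_intros]: "computes p_mod2 1 (\<lambda>xs. xs ! 0 mod 2)"
  unfolding p_mod2_def by (rule computes_PrimRec) (rule computes_intros | simp add: mod_Suc)+

lemma Least_less_Suc_mult:
  fixes d :: nat
  assumes "0 < d"
  shows "(LEAST y. x < Suc y * d) = x div d"
proof -
  have "x < Suc y * d \<longleftrightarrow> x div d \<le> y" for y
    using div_less_iff_less_mult[OF assms, of x "Suc y"] less_Suc_eq_le by metis
  then show ?thesis
    by (simp add: Least_equality)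
qed

definition p_div_pow2 :: recf where
  "p_div_pow2 = Minim (Comp p_sub [Comp Succ [Proj 1], Comp p_mul [Comp Succ [Proj 0], Comp p_pow2 [Proj 2]]])"

lemma computes_div_pow2 [computes_intros]: "computes p_div_pow2 2 (\<lambda>xs. xs ! 0 div 2 ^ xs ! 1)"
proof -
  have test: "computes (Comp p_sub [Comp Succ [Proj 1], Comp p_mul [Comp Succ [Proj 0], Comp p_pow2 [Proj 2]]])
      (Suc 2) (\<lambda>xs. Suc (xs ! 1) - Suc (xs ! 0) * 2 ^ xs ! 2)"
    by (rule computes_cong) (rule computes_intros | simp)+
  have "\<exists>y. Suc ((y # xs) ! 1) - Suc ((y # xs) ! 0) * 2 ^ (y # xs) ! 2 = 0" for xs
  proof
    have "Suc (xs ! 0) * 1 \<le> Suc (xs ! 0) * 2 ^ xs ! 1"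
      by (rule mult_le_mono2) simp
    then show "Suc ((xs ! 0 # xs) ! 1) - Suc ((xs ! 0 # xs) ! 0) * 2 ^ (xs ! 0 # xs) ! 2 = 0"
      by simp
  qed
  from computes_Minim[OF test this]
  show ?thesis
    unfolding p_div_pow2_def
    by (rule computes_cong) (simp add: Least_less_Suc_mult Suc_le_eq del: mult_Suc)
qed

definition p_bit :: recf where "p_bit = Comp p_mod2 [p_div_pow2]"

lemma computes_bit [computes_intros]: "computes p_bit 2 (\<lambda>xs. of_bool (bit (xs ! 0) (xs ! 1)))"
  unfolding p_bit_def
  by (rule computes_cong) (rule computes_intros | simp add: bit_iff_odd of_bool_odd_eq_mod_2)+

definition p_triangle :: recf where
  "p_triangle = PrimRec Zero (Comp p_add [Proj 1, Comp Succ [Proj 0]])"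

lemma computes_triangle [computes_intros]: "computes p_triangle 1 (\<lambda>xs. triangle (xs ! 0))"
  unfolding p_triangle_def by (rule computes_PrimRec) (rule computes_intros | simp)+

lemma triangle_mono: "m \<le> n \<Longrightarrow> triangle m \<le> triangle n"
  by (induction n) (auto simp: le_Suc_eq)

lemma Least_less_triangle:
  "(LEAST s. n < triangle (Suc s)) = fst (prod_decode n) + snd (prod_decode n)"
proof -
  obtain a b where ab: "prod_decode n = (a, b)"
    by fastforce
  then have n: "n = triangle (a + b) + a"
    using prod_decode_inverse[of n] by (simp add: prod_encode_def)
  have "(LEAST s. n < triangle (Suc s)) = a + b"
  proof (rule Least_equality)
    show "n < triangle (Suc (a + b))"
      using n by simp
  next
    fix s
    assume "n < triangle (Suc s)"
    with n have "\<not> triangle (Suc s) \<le> triangle (a + b)"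
      by simp
    then show "a + b \<le> s"
      using triangle_mono[of "Suc s" "a + b"] by linarith
  qed
  then show ?thesis
    using ab by simp
qed

text \<open>The Cantor pairing is inverted by searching for the diagonal \<open>a + b\<close> of \<open>prod_encode (a, b)\<close>.\<close>
definition p_diagonal :: recf where
  "p_diagonal = Minim (Comp p_sub [Comp Succ [Proj 1], Comp p_triangle [Comp Succ [Proj 0]]])"

lemma computes_diagonal [computes_intros]:
  "computes p_diagonal 1 (\<lambda>xs. fst (prod_decode (xs ! 0)) + snd (prod_decode (xs ! 0)))"
proof -
  have test: "computes (Comp p_sub [Comp Succ [Proj 1], Comp p_triangle [Comp Succ [Proj 0]]])
      (Suc 1) (\<lambda>xs. Suc (xs ! 1) - triangle (Suc (xs ! 0)))"
    by (rule computes_cong) (rule computes_intros | simp)+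
  have "\<exists>s. Suc ((s # xs) ! 1) - triangle (Suc ((s # xs) ! 0)) = 0" for xs
    by (rule exI[of _ "xs ! 0"]) simp
  from computes_Minim[OF test this]
  show ?thesis
    unfolding p_diagonal_def
    by (rule computes_cong) (simp add: Least_less_triangle Suc_le_eq del: triangle_Suc)
qed

definition p_fst :: recf where "p_fst = Comp p_sub [Proj 0, Comp p_triangle [p_diagonal]]"

lemma computes_fst [computes_intros]: "computes p_fst 1 (\<lambda>xs. fst (prod_decode (xs ! 0)))"
  unfolding p_fst_def
proof (rule computes_cong, (rule computes_intros | simp)+)
  fix xs :: "nat list"
  obtain a b where "prod_decode (xs ! 0) = (a, b)"
    by fastforce
  moreover from this have "xs ! 0 = triangle (a + b) + a"
    using prod_decode_inverse[of "xs ! 0"] by (simp add: prod_encode_def)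
  ultimately show "xs ! 0 - triangle (fst (prod_decode (xs ! 0)) + snd (prod_decode (xs ! 0))) =
      fst (prod_decode (xs ! 0))"
    by simp
qed

definition p_snd :: recf where "p_snd = Comp p_sub [p_diagonal, p_fst]"

lemma computes_snd [computes_intros]: "computes p_snd 1 (\<lambda>xs. snd (prod_decode (xs ! 0)))"
  unfolding p_snd_def by (rule computes_cong) (rule computes_intros | simp)+

definition hd_code :: "nat \<Rightarrow> nat" where "hd_code c = fst (prod_decode (c - 1))"
definition tl_code :: "nat \<Rightarrow> nat" where "tl_code c = snd (prod_decode (c - 1))"

lemma prod_decode_0: "prod_decode 0 = (0, 0)"
  using prod_encode_inverse[of "(0, 0)"] by (simp add: prod_encode_def)

lemma tl_code_list_encode [simp]: "tl_code (list_encode xs) = list_encode (tl xs)"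
  by (cases xs) (simp_all add: tl_code_def prod_decode_0)

lemma funpow_tl_code_list_encode: "(tl_code ^^ k) (list_encode xs) = list_encode (drop k xs)"
  by (induction k) (simp_all add: drop_Suc tl_drop)

lemma list_encode_eq_0_iff: "list_encode xs = 0 \<longleftrightarrow> xs = []"
  by (cases xs) auto

lemma funpow_tl_code_eq_0_iff: "(tl_code ^^ k) (list_encode xs) = 0 \<longleftrightarrow> length xs \<le> k"
  by (simp add: funpow_tl_code_list_encode list_encode_eq_0_iff)

lemma hd_code_funpow_tl_code:
  "k < length xs \<Longrightarrow> hd_code ((tl_code ^^ k) (list_encode xs)) = xs ! k"
  by (simp add: funpow_tl_code_list_encode Cons_nth_drop_Suc[symmetric] hd_code_def)

lemma length_le_list_encode: "length xs \<le> list_encode xs"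
proof (induction xs)
  case (Cons x xs)
  then show ?case
    using le_prod_encode_2[of "list_encode xs" x] by simp
qed simp

definition p_hd_code :: recf where "p_hd_code = Comp p_fst [p_pred]"
definition p_tl_code :: recf where "p_tl_code = Comp p_snd [p_pred]"

lemma computes_hd_code [computes_intros]: "computes p_hd_code 1 (\<lambda>xs. hd_code (xs ! 0))"
  unfolding p_hd_code_def hd_code_def by (rule computes_cong) (rule computes_intros | simp)+

lemma computes_tl_code [computes_intros]: "computes p_tl_code 1 (\<lambda>xs. tl_code (xs ! 0))"
  unfolding p_tl_code_def tl_code_def by (rule computes_cong) (rule computes_intros | simp)+

definition p_drop_code :: recf where "p_drop_code = PrimRec (Proj 0) (Comp p_tl_code [Proj 1])"

lemma computes_drop_code [computes_intros]:
  "computes p_drop_code 2 (\<lambda>xs. (tl_code ^^ xs ! 0) (xs ! 1))"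
  unfolding p_drop_code_def by (rule computes_PrimRec) (rule computes_intros | simp)+

definition p_bounded_sum :: "recf \<Rightarrow> nat \<Rightarrow> recf" where
  "p_bounded_sum f n =
     PrimRec Zero (Comp p_add [Proj 1, Comp f (Proj 0 # map (\<lambda>i. Proj (i + 2)) [0..<n - 1])])"

lemma computes_bounded_sum:
  assumes "computes f n F" and "0 < n"
  shows "computes (p_bounded_sum f n) n (\<lambda>xs. \<Sum>j<xs ! 0. F (xs[0 := j]))"
proof -
  have projs: "list_all2 (\<lambda>g G. computes g (Suc n) G)
      (Proj 0 # map (\<lambda>i. Proj (i + 2)) [0..<n - 1]) ((\<lambda>xs. xs ! 0) # map (\<lambda>i xs. xs ! (i + 2)) [0..<n - 1])"
    using \<open>0 < n\<close> by (auto simp: list_all2_conv_all_nth nth_Cons' intro!: computes_Proj)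
  have summand: "computes (Comp f (Proj 0 # map (\<lambda>i. Proj (i + 2)) [0..<n - 1])) (Suc n)
      (\<lambda>xs. F (xs ! 0 # drop 2 xs))"
  proof (rule computes_cong[OF computes_Comp[OF _ projs]])
    show "computes f (length (Proj 0 # map (\<lambda>i. Proj (i + 2)) [0..<n - 1])) F"
      using assms by simp
    fix xs :: "nat list"
    assume "length xs = Suc n"
    then have "map (\<lambda>i. xs ! (i + 2)) [0..<n - 1] = drop 2 xs"
      by (simp add: list_eq_iff_nth_eq)
    then show "F (map (\<lambda>G. G xs) ((\<lambda>xs. xs ! 0) # map (\<lambda>i xs. xs ! (i + 2)) [0..<n - 1])) =
        F (xs ! 0 # drop 2 xs)"
      by (simp add: comp_def)
  qed
  show ?thesis
    unfolding p_bounded_sum_def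
    by (rule computes_PrimRec[OF \<open>0 < n\<close> computes_Zero
          computes_Comp2[OF computes_add computes_Proj summand]])
      (use \<open>0 < n\<close> in simp_all)
qed

primrec p_table :: "(nat \<Rightarrow> nat) \<Rightarrow> nat \<Rightarrow> recf" where
  "p_table f 0 = Zero"
| "p_table f (Suc n) = Comp p_add [p_table f n, Comp p_mul [Comp p_eq [Proj 0, p_const n], p_const (f n)]]"

lemma computes_table: "computes (p_table f n) 1 (\<lambda>xs. if xs ! 0 < n then f (xs ! 0) else 0)"
proof (induction n)
  case 0
  show ?case
    by (simp add: computes_Zero)
next
  case (Suc n)
  have "computes (p_table f (Suc n)) 1
      (\<lambda>xs. (if xs ! 0 < n then f (xs ! 0) else 0) + of_bool (xs ! 0 = n) * f n)"
    using computes_Comp2[OF computes_add Suc.IH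
        computes_Comp2[OF computes_mul computes_Comp2[OF computes_eq computes_Proj computes_const]
          computes_const]]
    by simp
  then show ?case
    by (rule computes_cong) (auto simp: less_Suc_eq)
qed

section \<open>Bi-infinite walks in finite graphs\<close>

definition mask_of :: "(nat \<Rightarrow> bool) \<Rightarrow> nat \<Rightarrow> nat" where
  "mask_of P n = horner_sum of_bool 2 (map P [0..<n])"

lemma mask_of_eq_sum: "mask_of P n = (\<Sum>j<n. 2 ^ j * of_bool (P j))"
  by (simp add: mask_of_def horner_sum_eq_sum atLeast0LessThan mult.commute)

lemma bit_mask_of_iff: "bit (mask_of P n) i \<longleftrightarrow> i < n \<and> P i"
  by (auto simp: mask_of_def bit_horner_sum_bit_iff)

lemma mask_of_eq_0_iff: "mask_of P n = 0 \<longleftrightarrow> (\<forall>i<n. \<not> P i)"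
  by (auto simp: bit_eq_iff[of "mask_of P n"] bit_mask_of_iff)

lemma mask_of_True: "mask_of (\<lambda>_. True) n = 2 ^ n - 1"
proof -
  have "mask_of (\<lambda>_. True) n = mask n"
    by (simp add: bit_eq_iff bit_mask_of_iff bit_mask_iff)
  then show ?thesis
    by (simp add: mask_eq_exp_minus_1)
qed

primrec has_walk :: "(nat \<Rightarrow> nat \<Rightarrow> bool) \<Rightarrow> nat \<Rightarrow> nat \<Rightarrow> nat \<Rightarrow> bool" where
  "has_walk R n 0 j = True"
| "has_walk R n (Suc k) j = (\<exists>i<n. R j i \<and> has_walk R n k i)"

definition reach_step :: "(nat \<Rightarrow> nat \<Rightarrow> bool) \<Rightarrow> nat \<Rightarrow> nat \<Rightarrow> nat" where
  "reach_step R n S = mask_of (\<lambda>j. \<exists>i<n. R j i \<and> bit S i) n"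

lemma funpow_reach_step: "(reach_step R n ^^ k) (2 ^ n - 1) = mask_of (has_walk R n k) n"
proof (induction k)
  case 0
  show ?case
    by (simp add: mask_of_True)
next
  case (Suc k)
  have "(reach_step R n ^^ Suc k) (2 ^ n - 1) = reach_step R n (mask_of (has_walk R n k) n)"
    using Suc.IH by simp
  also have "\<dots> = mask_of (has_walk R n (Suc k)) n"
    unfolding reach_step_def
    by (rule arg_cong[where f = "\<lambda>P. mask_of P n"]) (auto simp: bit_mask_of_iff fun_eq_iff)
  finally show ?case .
qed

lemma has_walk_imp_path: "has_walk R n k j \<Longrightarrow> \<exists>f. f 0 = j \<and> (\<forall>l<k. R (f l) (f (Suc l)))"
proof (induction k arbitrary: j)
  case (Suc k)
  then obtain i where "R j i" and "has_walk R n k i"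
    by auto
  with Suc.IH obtain f where "R j i" "f 0 = i" "\<forall>l<k. R (f l) (f (Suc l))"
    by blast
  then have "\<forall>l<Suc k. R (case_nat j f l) (case_nat j f (Suc l))"
    by (auto simp: less_Suc_eq_0_disj)
  then show ?case
    by (intro exI[of _ "case_nat j f"]) simp
qed auto

text \<open>Running around the cycle \<open>f p, \<dots>, f q = f p\<close> forever, in both directions.\<close>
lemma periodic_walk:
  assumes path: "\<forall>l<q. R (f l) (f (Suc l))" and "p < q" and cycle: "f p = f q"
  shows "\<exists>g::int \<Rightarrow> nat. \<forall>z. R (g z) (g (z + 1))"
proof -
  define d where "d = q - p"
  define g where "g z = f (p + nat (z mod int d))" for z
  have "R (g z) (g (z + 1))" for z
  proof -
    define r where "r = nat (z mod int d)"
    have "0 < d" and "r < d"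
      using \<open>p < q\<close> by (simp_all add: d_def r_def nat_less_iff)
    have "(z + 1) mod int d = (int r + 1) mod int d"
      using \<open>0 < d\<close> by (simp add: r_def mod_add_left_eq)
    then have next_index: "nat ((z + 1) mod int d) = Suc r mod d"
      by (simp add: nat_mod_as_int add.commute)
    have "g (z + 1) = f (Suc (p + r))"
    proof (cases "Suc r = d")
      case True
      then have "Suc (p + r) = q"
        using \<open>p < q\<close> by (simp add: d_def)
      then show ?thesis
        using next_index True cycle by (simp add: g_def)
    next
      case False
      then show ?thesis
        using next_index \<open>r < d\<close> by (simp add: g_def)
    qed
    moreover have "g z = f (p + r)"
      by (simp add: g_def r_def)
    moreover have "p + r < q"
      using \<open>r < d\<close> by (simp add: d_def)
    ultimately show ?thesis
      using path by simp
  qed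
  then show ?thesis
    by blast
qed

lemma bi_infinite_walk_iff:
  assumes bounded: "\<And>j i. R j i \<Longrightarrow> i < n"
  shows "(\<exists>j<n. has_walk R n (Suc n) j) \<longleftrightarrow> (\<exists>g::int \<Rightarrow> nat. \<forall>z. R (g z) (g (z + 1)))"
proof
  assume "\<exists>j<n. has_walk R n (Suc n) j"
  then obtain f where path: "\<forall>l<Suc n. R (f l) (f (Suc l))"
    using has_walk_imp_path by blast
  have "f ` {1..Suc n} \<subseteq> {..<n}"
  proof
    fix x
    assume "x \<in> f ` {1..Suc n}"
    then obtain m where "x = f (Suc m)" and "m < Suc n"
      by (auto simp: Suc_le_eq gr0_conv_Suc)
    then show "x \<in> {..<n}"
      using bounded path by blast
  qed
  then have "\<not> inj_on f {1..Suc n}"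
    using card_inj_on_le[of f "{1..Suc n}" "{..<n}"] by auto
  then obtain p q where "p \<in> {1..Suc n}" "q \<in> {1..Suc n}" "p < q" "f p = f q"
    unfolding inj_on_def by (metis linorder_neqE_nat)
  then show "\<exists>g::int \<Rightarrow> nat. \<forall>z. R (g z) (g (z + 1))"
    using path by (intro periodic_walk[of q R f p]) auto
next
  assume "\<exists>g::int \<Rightarrow> nat. \<forall>z. R (g z) (g (z + 1))"
  then obtain g :: "int \<Rightarrow> nat" where g: "\<And>z. R (g z) (g (z + 1))"
    by blast
  have below: "g z < n" for z
    using bounded[OF g[of "z - 1"]] by simp
  have "has_walk R n k (g z)" for k z
    by (induction k arbitrary: z) (use g below in auto)
  then show "\<exists>j<n. has_walk R n (Suc n) j"
    using below by blast
qed

section \<open>Snakes as walks in the line graph\<close>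

definition dot :: "z2 \<Rightarrow> z2 \<Rightarrow> int" where
  "dot x y = fst x * fst y + snd x * snd y"

lemma dot_sum_left: "dot (\<Sum>a\<in>A. f a) v = (\<Sum>a\<in>A. dot (f a) v)"
  by (simp add: dot_def fst_sum snd_sum sum_distrib_right sum.distrib)

lemma gens_eq: "gens = {(1, 0), (0, 1), (-1, 0), (0, -1)}"
  by (simp add: gens_def gen_a_def gen_b_def)

lemma dot_gens_self: "d \<in> gens \<Longrightarrow> dot d d = 1"
  by (auto simp: gens_eq dot_def)

lemma dot_gens_nonpos: "d \<in> gens \<Longrightarrow> g \<in> gens \<Longrightarrow> d \<noteq> g \<Longrightarrow> dot d g \<le> 0"
  by (auto simp: gens_eq dot_def)

lemma orthogonal_gens_eq:
  "g \<in> gens \<Longrightarrow> d \<in> gens \<Longrightarrow> d' \<in> gens \<Longrightarrow> dot d g = 0 \<Longrightarrow> dot d' g = 0 \<Longrightarrow> d' \<noteq> - d \<Longrightarrow> d' = d"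
  by (auto simp: gens_eq dot_def)

lemma non_backtracking_walk_inj:
  fixes \<omega> :: "int \<Rightarrow> z2"
  assumes "D \<subseteq> gens" and "D \<noteq> gens"
    and steps: "\<And>i. \<omega> (i + 1) - \<omega> i \<in> D"
    and no_backtrack: "\<And>i. \<omega> (i + 2) - \<omega> (i + 1) \<noteq> - (\<omega> (i + 1) - \<omega> i)"
  shows "inj \<omega>"
proof (rule linorder_injI)
  define \<delta> where "\<delta> i = \<omega> (i + 1) - \<omega> i" for i
  obtain g where g: "g \<in> gens" "g \<notin> D"
    using assms(1,2) by blast
  have \<delta>_gens: "\<delta> i \<in> gens" and \<delta>_ne: "\<delta> i \<noteq> g" for i
    using steps assms(1) g by (auto simp: \<delta>_def)
  fix a b :: int
  assume "a < b"
  define n where "n = nat (b - a)"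
  have "0 < n" and b: "b = a + int n"
    using \<open>a < b\<close> by (auto simp: n_def)
  have telescope: "\<omega> b - \<omega> a = (\<Sum>k<n. \<delta> (a + int k))"
    using sum_lessThan_telescope[of "\<lambda>k. \<omega> (a + int k)" n] by (simp add: \<delta>_def b ac_simps)
  show "\<omega> a \<noteq> \<omega> b"
  proof
    assume "\<omega> a = \<omega> b"
    have dot_telescope: "(\<Sum>k<n. dot (\<delta> (a + int k)) v) = 0" for v
    proof -
      have "(\<Sum>k<n. dot (\<delta> (a + int k)) v) = dot (\<omega> b - \<omega> a) v"
        by (simp only: telescope dot_sum_left)
      also have "\<dots> = 0"
        using \<open>\<omega> a = \<omega> b\<close> by (simp add: dot_def)
      finally show ?thesis .
    qed
    have "(\<Sum>k<n. - dot (\<delta> (a + int k)) g) = 0"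
      using dot_telescope[of g] by (simp add: sum_negf)
    then have orth: "dot (\<delta> (a + int k)) g = 0" if "k < n" for k
      using that dot_gens_nonpos[OF \<delta>_gens g(1) \<delta>_ne] by (subst (asm) sum_nonneg_eq_0_iff) auto
    have straight: "\<delta> (a + int k) = \<delta> a" if "k < n" for k
      using that
    proof (induction k)
      case (Suc k)
      have "\<delta> (a + int (Suc k)) \<noteq> - \<delta> (a + int k)"
        using no_backtrack[of "a + int k"] unfolding \<delta>_def by (simp add: ac_simps)
      with orthogonal_gens_eq[OF g(1) \<delta>_gens \<delta>_gens orth[of k] orth[of "Suc k"]] Suc
      show ?case
        by simp
    qed simp
    have "(\<Sum>k<n. dot (\<delta> (a + int k)) (\<delta> a)) = int n"
      using straight dot_gens_self[OF \<delta>_gens] by simp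
    then show False
      using dot_telescope[of "\<delta> a"] \<open>0 < n\<close> by simp
  qed
qed

lemma exists_antidifference:
  fixes \<delta> :: "int \<Rightarrow> 'a::ab_group_add"
  shows "\<exists>\<omega>. \<forall>i. \<omega> (i + 1) - \<omega> i = \<delta> i"
proof (intro exI allI)
  fix i :: int
  show "((\<Sum>k\<in>{0..<i + 1}. \<delta> k) - (\<Sum>k\<in>{i + 1..<0}. \<delta> k)) -
      ((\<Sum>k\<in>{0..<i}. \<delta> k) - (\<Sum>k\<in>{i..<0}. \<delta> k)) = \<delta> i"
  proof (cases "0 \<le> i")
    case True
    then have "{0..<i + 1} = insert i {0..<i}" and "{i + 1..<0} = {}" and "{i..<0} = {}"
      by auto
    then show ?thesis
      by simp
  next
    case False
    then have "{0..<i + 1} = {}" and "{0..<i} = {}" and "{i..<0} = insert i {i + 1..<0}"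
      by auto
    then show ?thesis
      by simp
  qed
qed

definition turn_ok :: "z2 set \<Rightarrow> nat \<Rightarrow> nat \<Rightarrow> bool" where
  "turn_ok D d e \<longleftrightarrow> dir_of d \<in> D \<and> dir_of e \<in> D \<and> dir_of e \<noteq> - dir_of d"

text \<open>The line graph of the tileset graph, with the indices into \<open>es\<close> as vertices.\<close>
definition line_adj :: "z2 set \<Rightarrow> (nat \<times> nat \<times> nat) list \<Rightarrow> nat \<Rightarrow> nat \<Rightarrow> bool" where
  "line_adj D es j i \<longleftrightarrow> j < length es \<and> i < length es \<and>
     fst (snd (es ! j)) = fst (es ! i) \<and> turn_ok D (snd (snd (es ! j))) (snd (snd (es ! i)))"

lemma mem_edges_of_iff:
  "(t, t', s) \<in> edges_of es \<longleftrightarrow>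
   (\<exists>j<length es. fst (es ! j) = t \<and> fst (snd (es ! j)) = t' \<and> dir_of (snd (snd (es ! j))) = s)"
proof
  assume "(t, t', s) \<in> edges_of es"
  then obtain e where "e \<in> set es" and e: "(t, t', s) = (\<lambda>(t, t', d). (t, t', dir_of d)) e"
    unfolding edges_of_def by blast
  then obtain j where "j < length es" and "es ! j = e"
    by (auto simp: in_set_conv_nth)
  with e show "\<exists>j<length es. fst (es ! j) = t \<and> fst (snd (es ! j)) = t' \<and> dir_of (snd (snd (es ! j))) = s"
    by (cases e) auto
next
  assume "\<exists>j<length es. fst (es ! j) = t \<and> fst (snd (es ! j)) = t' \<and> dir_of (snd (snd (es ! j))) = s"
  then obtain j where "j < length es" and "(t, t', s) = (\<lambda>(t, t', d). (t, t', dir_of d)) (es ! j)"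
    by (auto split: prod.splits)
  then show "(t, t', s) \<in> edges_of es"
    unfolding edges_of_def by (blast intro: rev_image_eqI nth_mem)
qed

lemma line_walk_of_snake:
  assumes "has_snake_in D (set ts) (edges_of es)"
  shows "\<exists>g::int \<Rightarrow> nat. \<forall>z. line_adj D es (g z) (g (z + 1))"
proof -
  obtain \<omega> :: "int \<Rightarrow> z2" and \<zeta> where "inj \<omega>" and steps: "\<And>i. \<omega> (i + 1) - \<omega> i \<in> D"
    and edges: "\<And>i. (\<zeta> i, \<zeta> (i + 1), \<omega> (i + 1) - \<omega> i) \<in> edges_of es"
    using assms unfolding has_snake_in_def by blast
  obtain g where g: "\<And>z. g z < length es \<and> fst (es ! g z) = \<zeta> z \<and> fst (snd (es ! g z)) = \<zeta> (z + 1) \<and>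
      dir_of (snd (snd (es ! g z))) = \<omega> (z + 1) - \<omega> z"
    using edges[unfolded mem_edges_of_iff] by metis
  have no_backtrack: "\<omega> (z + 2) - \<omega> (z + 1) \<noteq> - (\<omega> (z + 1) - \<omega> z)" for z
  proof
    assume "\<omega> (z + 2) - \<omega> (z + 1) = - (\<omega> (z + 1) - \<omega> z)"
    then have "\<omega> (z + 2) = \<omega> z"
      by (simp add: algebra_simps)
    with \<open>inj \<omega>\<close> show False
      by (auto dest: injD)
  qed
  have "line_adj D es (g z) (g (z + 1))" for z
    using g[of z] g[of "z + 1"] steps[of z] steps[of "z + 1"] no_backtrack[of z]
    by (simp add: line_adj_def turn_ok_def add.assoc)
  then show ?thesis
    by blast
qed

lemma snake_of_line_walk:
  fixes g :: "int \<Rightarrow> nat"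
  assumes "D \<subseteq> gens" and "D \<noteq> gens" and graph: "tileset_graph (set ts) (edges_of es)"
    and walk: "\<And>z. line_adj D es (g z) (g (z + 1))"
  shows "has_snake_in D (set ts) (edges_of es)"
proof -
  define \<delta> where "\<delta> z = dir_of (snd (snd (es ! g z)))" for z
  define \<zeta> where "\<zeta> z = fst (es ! g z)" for z
  obtain \<omega> :: "int \<Rightarrow> z2" where \<omega>: "\<And>z. \<omega> (z + 1) - \<omega> z = \<delta> z"
    using exists_antidifference by blast
  have steps: "\<omega> (z + 1) - \<omega> z \<in> D" for z
    using walk[of z] by (simp add: \<omega> \<delta>_def line_adj_def turn_ok_def)
  have "\<omega> (z + 2) - \<omega> (z + 1) \<noteq> - (\<omega> (z + 1) - \<omega> z)" for z
    using walk[of z] \<omega>[of "z + 1"] \<omega>[of z] by (simp add: \<delta>_def line_adj_def turn_ok_def add.assoc)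
  then have "inj \<omega>"
    using non_backtracking_walk_inj assms(1,2) steps by blast
  have edges: "(\<zeta> z, \<zeta> (z + 1), \<omega> (z + 1) - \<omega> z) \<in> edges_of es" for z
    using walk[of z] unfolding mem_edges_of_iff by (auto simp: \<omega> \<delta>_def \<zeta>_def line_adj_def)
  have "\<zeta> z \<in> set ts" for z
    using edges[of z] graph by (auto simp: tileset_graph_def)
  then show ?thesis
    unfolding has_snake_in_def using \<open>inj \<omega>\<close> steps edges assms(1) by blast
qed

section \<open>The decision procedure\<close>

definition edge_code :: "nat \<times> nat \<times> nat \<Rightarrow> nat" where
  "edge_code = (\<lambda>(t, t', d). prod_encode (t, prod_encode (t', d)))"

lemma snd_prod_decode_encode_instance:
  "snd (prod_decode (encode_instance ts es)) = list_encode (map edge_code es)"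
  by (simp add: encode_instance_def edge_code_def)

definition nth_code :: "nat \<Rightarrow> nat \<Rightarrow> nat" where
  "nth_code c k = hd_code ((tl_code ^^ k) c)"

lemma nth_code_list_encode: "k < length xs \<Longrightarrow> nth_code (list_encode xs) k = xs ! k"
  by (simp add: nth_code_def hd_code_funpow_tl_code)

text \<open>A pair of direction codes \<open>d, e < 4\<close> is looked up in a table under the index \<open>4 * d + e\<close>.\<close>
definition turn_code :: "z2 set \<Rightarrow> nat \<Rightarrow> bool" where
  "turn_code D c \<longleftrightarrow> c < 16 \<and> turn_ok D (c div 4) (c mod 4)"

lemma turn_code_iff: "d < 4 \<Longrightarrow> e < 4 \<Longrightarrow> turn_code D (4 * d + e) \<longleftrightarrow> turn_ok D d e"
  by (simp add: turn_code_def)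

definition adj_code :: "z2 set \<Rightarrow> nat \<Rightarrow> nat \<Rightarrow> nat \<Rightarrow> bool" where
  "adj_code D c j i \<longleftrightarrow> (tl_code ^^ j) c \<noteq> 0 \<and> (tl_code ^^ i) c \<noteq> 0 \<and>
     fst (prod_decode (snd (prod_decode (nth_code c j)))) = fst (prod_decode (nth_code c i)) \<and>
     turn_code D (4 * snd (prod_decode (snd (prod_decode (nth_code c j)))) +
       snd (prod_decode (snd (prod_decode (nth_code c i)))))"

lemma adj_code_list_encode:
  assumes "\<forall>(t, t', d) \<in> set es. d < 4"
  shows "adj_code D (list_encode (map edge_code es)) = line_adj D es"
proof (intro ext)
  fix j i
  show "adj_code D (list_encode (map edge_code es)) j i = line_adj D es j i"
  proof (cases "j < length es \<and> i < length es")
    case True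
    obtain t1 t1' d1 where j: "es ! j = (t1, t1', d1)"
      by (cases "es ! j") auto
    obtain t2 t2' d2 where i: "es ! i = (t2, t2', d2)"
      by (cases "es ! i") auto
    have "d1 < 4" and "d2 < 4"
      using assms True j i nth_mem[of j es] nth_mem[of i es] by fastforce+
    then show ?thesis
      using True i j
      by (simp add: adj_code_def line_adj_def funpow_tl_code_eq_0_iff nth_code_list_encode
          edge_code_def turn_code_iff)
  next
    case False
    then show ?thesis
      by (auto simp: adj_code_def line_adj_def funpow_tl_code_eq_0_iff)
  qed
qed

definition p_nth_code :: recf where "p_nth_code = Comp p_hd_code [Comp p_drop_code [Proj 1, Proj 0]]"

lemma computes_nth_code [computes_intros]: "computes p_nth_code 2 (\<lambda>xs. nth_code (xs ! 0) (xs ! 1))"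
  unfolding p_nth_code_def nth_code_def by (rule computes_cong) (rule computes_intros | simp)+

definition p_adj_code :: "z2 set \<Rightarrow> recf" where
  "p_adj_code D =
     Comp p_mul [Comp p_mul [Comp p_mul [
         Comp p_nonzero [Comp p_drop_code [Proj 1, Proj 0]],
         Comp p_nonzero [Comp p_drop_code [Proj 2, Proj 0]]],
       Comp p_eq [Comp p_fst [Comp p_snd [Comp p_nth_code [Proj 0, Proj 1]]],
         Comp p_fst [Comp p_nth_code [Proj 0, Proj 2]]]],
       Comp (p_table (\<lambda>c. of_bool (turn_ok D (c div 4) (c mod 4))) 16)
         [Comp p_add [Comp p_mul [p_const 4, Comp p_snd [Comp p_snd [Comp p_nth_code [Proj 0, Proj 1]]]],
           Comp p_snd [Comp p_snd [Comp p_nth_code [Proj 0, Proj 2]]]]]]"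

lemma computes_adj_code [computes_intros]:
  "computes (p_adj_code D) 3 (\<lambda>xs. of_bool (adj_code D (xs ! 0) (xs ! 1) (xs ! 2)))"
  unfolding p_adj_code_def
  by (rule computes_cong) (rule computes_intros computes_table | simp add: adj_code_def turn_code_def)+

text \<open>The arguments of \<open>p_reach_step D\<close> are a bit mask \<open>S\<close> and a list code \<open>c\<close>; the inner sum
  counts the successors of \<open>j\<close> in \<open>S\<close>.\<close>
definition p_reach_step :: "z2 set \<Rightarrow> recf" where
  "p_reach_step D =
     Comp (p_bounded_sum
       (Comp p_mul [Comp p_pow2 [Proj 0],
          Comp p_nonzero [Comp (p_bounded_sum
            (Comp p_mul [Comp (p_adj_code D) [Proj 3, Proj 1, Proj 0], Comp p_bit [Proj 2, Proj 0]]) 4)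
            [Proj 2, Proj 0, Proj 1, Proj 2]]]) 3)
     [Proj 1, Proj 0, Proj 1]"

lemma computes_reach_step [computes_intros]:
  "computes (p_reach_step D) 2 (\<lambda>xs. reach_step (adj_code D (xs ! 1)) (xs ! 1) (xs ! 0))"
proof -
  have "computes (Comp p_mul [Comp (p_adj_code D) [Proj 3, Proj 1, Proj 0], Comp p_bit [Proj 2, Proj 0]]) 4
      (\<lambda>xs. of_bool (adj_code D (xs ! 3) (xs ! 1) (xs ! 0) \<and> bit (xs ! 2) (xs ! 0)))"
    by (rule computes_cong) (rule computes_intros | simp)+
  from computes_bounded_sum[OF this zero_less_numeral]
  have successors: "computes (p_bounded_sum
      (Comp p_mul [Comp (p_adj_code D) [Proj 3, Proj 1, Proj 0], Comp p_bit [Proj 2, Proj 0]]) 4) 4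
      (\<lambda>xs. \<Sum>i<xs ! 0. of_bool (adj_code D (xs ! 3) (xs ! 1) i \<and> bit (xs ! 2) i))"
    by (rule computes_cong) (simp add: nth_list_update)
  have "computes (Comp p_mul [Comp p_pow2 [Proj 0], Comp p_nonzero [Comp (p_bounded_sum
      (Comp p_mul [Comp (p_adj_code D) [Proj 3, Proj 1, Proj 0], Comp p_bit [Proj 2, Proj 0]]) 4)
      [Proj 2, Proj 0, Proj 1, Proj 2]]]) 3
      (\<lambda>xs. 2 ^ xs ! 0 *
        of_bool ((\<Sum>i<xs ! 2. of_bool (adj_code D (xs ! 2) (xs ! 0) i \<and> bit (xs ! 1) i) :: nat) \<noteq> 0))"
    by (rule computes_cong) (rule computes_intros successors | simp)+
  note outer = computes_bounded_sum[OF this zero_less_numeral]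
  have reach_step_sum: "computes (p_reach_step D) 2 (\<lambda>xs. \<Sum>j<xs ! 1. 2 ^ j *
      of_bool ((\<Sum>i<xs ! 1. of_bool (adj_code D (xs ! 1) j i \<and> bit (xs ! 0) i) :: nat) \<noteq> 0))"
    unfolding p_reach_step_def
    by (rule computes_cong) (rule computes_intros outer | simp add: nth_list_update)+
  have exists_iff: "(\<Sum>i<n. of_bool (P i) :: nat) \<noteq> 0 \<longleftrightarrow> (\<exists>i<n. P i)" for n :: nat and P
    by (simp only: sum_eq_0_iff[OF finite_lessThan]) auto
  show ?thesis
    by (rule computes_cong[OF reach_step_sum]) (simp only: reach_step_def mask_of_eq_sum exists_iff)
qed

definition p_decide :: "z2 set \<Rightarrow> recf" where
  "p_decide D = Comp p_nonzero [Comp (PrimRec (Comp p_sub [Comp p_pow2 [Proj 0], p_const 1])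
     (Comp (p_reach_step D) [Proj 1, Proj 2])) [Comp Succ [Comp p_snd [Proj 0]], Comp p_snd [Proj 0]]]"

lemma computes_decide:
  "computes (p_decide D) 1 (\<lambda>xs. let c = snd (prod_decode (xs ! 0)) in
     of_bool ((reach_step (adj_code D c) c ^^ Suc c) (2 ^ c - 1) \<noteq> 0))"
proof -
  have iterate: "computes (PrimRec (Comp p_sub [Comp p_pow2 [Proj 0], p_const 1])
      (Comp (p_reach_step D) [Proj 1, Proj 2])) 2
      (\<lambda>xs. (reach_step (adj_code D (xs ! 1)) (xs ! 1) ^^ xs ! 0) (2 ^ xs ! 1 - 1))"
    by (rule computes_PrimRec) (rule computes_intros | simp)+
  show ?thesis
    unfolding p_decide_def by (rule computes_cong) (rule computes_intros iterate | simp add: Let_def)+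
qed

lemma decide_correct:
  assumes "D \<subseteq> gens" and "D \<noteq> gens"
    and codes: "\<forall>(t, t', d) \<in> set es. d < 4" and graph: "tileset_graph (set ts) (edges_of es)"
  shows "rec_eval (p_decide D) [encode_instance ts es] (of_bool (has_snake_in D (set ts) (edges_of es)))"
proof -
  define c where "c = list_encode (map edge_code es)"
  have bounded: "line_adj D es j i \<Longrightarrow> i < c" for j i
    using length_le_list_encode[of "map edge_code es"] by (auto simp: line_adj_def c_def)
  have "adj_code D c = line_adj D es"
    unfolding c_def by (rule adj_code_list_encode[OF codes])
  then have "(reach_step (adj_code D c) c ^^ Suc c) (2 ^ c - 1) \<noteq> 0 \<longleftrightarrow>
      (\<exists>j<c. has_walk (line_adj D es) c (Suc c) j)"
    by (simp only: funpow_reach_step mask_of_eq_0_iff) blast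
  also have "\<dots> \<longleftrightarrow> (\<exists>g::int \<Rightarrow> nat. \<forall>z. line_adj D es (g z) (g (z + 1)))"
    using bi_infinite_walk_iff bounded by blast
  also have "\<dots> \<longleftrightarrow> has_snake_in D (set ts) (edges_of es)"
    using line_walk_of_snake snake_of_line_walk[OF assms(1,2) graph] by blast
  finally have "(reach_step (adj_code D c) c ^^ Suc c) (2 ^ c - 1) \<noteq> 0 \<longleftrightarrow>
      has_snake_in D (set ts) (edges_of es)" .
  moreover have "snd (prod_decode (encode_instance ts es)) = c"
    by (simp add: c_def snd_prod_decode_encode_instance)
  ultimately show ?thesis
    using computesD[OF computes_decide, of "[encode_instance ts es]" D] by (simp add: Let_def)
qed

theorem theorem2:
  fixes D :: "z2 set"
  assumes "D \<subseteq> gens" and "card D \<in> {2, 3}"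
  shows "snake_problem_decidable D"
proof -
  have "card gens = 4"
    by (simp add: gens_eq)
  with assms(2) have "D \<noteq> gens"
    by auto
  show ?thesis
    unfolding snake_problem_decidable_def of_bool_def[symmetric]
    using decide_correct[OF assms(1) \<open>D \<noteq> gens\<close>] by blast
qed

end
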